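(* Let $\pi$ and $\sigma$ be Knuth equivalent permutations of $[N]$ and let $I$ be a Dyck pattern interval of $\pi$. Then $I$ is also a Dyck pattern interval of $\sigma$. Furthermore, if $\pi\xrightarrow{I}\pi'$ and $\sigma\xrightarrow{I}\sigma'$ are the corresponding edges labeled $I$ in the crystal skeletons, then $\pi'$ and $\sigma'$ are Knuth equivalent.
   Context: Two words are Knuth equivalent if one can be obtained from the other by a sequence of the elementary relations $acb\equiv cab$ for $a\le b<c$ and $bac\equiv bca$ for $a<b\le c$ applied to adjacent letters. For a permutation $\pi$ of $[N]$ and an interval $I=[i,i+2m]\subseteq[N]$ with $m\ge1$, let $\pi|_I$ be the subword of letters in $I$; $I$ is a Dyck pattern interval of $\pi$ if the RSK insertion tableau $P(\pi|_I)$ has bottom row $i,\dots,i+m$ and top row $i+m+1,\dots,i+2m$ (French notation). The edge labeled $I$ out of $\pi$ goes to $\pi'=\mathsf{std}(f_i(w))$, where $w$ is obtained from $\pi$ by replacing the letters $i,\dots,i+m$ by $i$ and $i+m+1,\dots,i+2m$ by $i+1$; here $f_i$ is the crystal operator on words (in the subword of letters $i,i+1$, bracket each $i+1$ with an unbracketed $i$ to its right, parenthesis-style; $f_i$ changes the rightmost unbracketed $i$ into $i+1$), and $\mathsf{std}$ replaces the $a_j$ occurrences of each letter $j$, left to right, by $a_1+\dots+a_{j-1}+1,\dots,a_1+\dots+a_j$. *)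

theory Defs
  imports Main
begin

definition is_perm :: "nat \<Rightarrow> nat list \<Rightarrow> bool" where
  "is_perm N w \<longleftrightarrow> distinct w \<and> set w = {1..N}"

inductive knuth_step :: "nat list \<Rightarrow> nat list \<Rightarrow> bool" where
  K1: "a \<le> b \<Longrightarrow> b < c \<Longrightarrow> knuth_step (u @ [a, c, b] @ v) (u @ [c, a, b] @ v)"
| K2: "a < b \<Longrightarrow> b \<le> c \<Longrightarrow> knuth_step (u @ [b, a, c] @ v) (u @ [b, c, a] @ v)"

definition knuth_equiv :: "nat list \<Rightarrow> nat list \<Rightarrow> bool" where
  "knuth_equiv = (sup knuth_step knuth_step\<inverse>\<inverse>)\<^sup>*\<^sup>*"

fun row_ins :: "nat \<Rightarrow> nat list \<Rightarrow> nat list \<times> nat option" where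
  "row_ins x [] = ([x], None)"
| "row_ins x (y # ys) =
     (if x < y then (x # ys, Some y)
      else (let (r, b) = row_ins x ys in (y # r, b)))"

fun tab_ins :: "nat \<Rightarrow> nat list list \<Rightarrow> nat list list" where
  "tab_ins x [] = [[x]]"
| "tab_ins x (r # rs) =
     (case row_ins x r of
        (r', None) \<Rightarrow> r' # rs
      | (r', Some y) \<Rightarrow> r' # tab_ins y rs)"

text \<open>Insertion tableau P(w): insert the letters of w from left to right.
  The first list is the bottom row.\<close>
definition P_tab :: "nat list \<Rightarrow> nat list list" where
  "P_tab w = fold tab_ins w []"

definition dyck_interval :: "nat \<Rightarrow> nat list \<Rightarrow> nat \<Rightarrow> nat \<Rightarrow> bool" where
  "dyck_interval N \<pi> i m \<longleftrightarrow>
     1 \<le> m \<and> 1 \<le> i \<and> i + 2 * m \<le> N \<and>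
     P_tab (filter (\<lambda>x. x \<in> {i..i + 2 * m}) \<pi>) = [[i..<i + m + 1], [i + m + 1..<i + 2 * m + 1]]"

text \<open>Positions (0-based) of unbracketed letters i, scanning left to right; c counts
  currently open (unbracketed so far) letters i+1, each of which brackets with the
  nearest available i to its right.\<close>
fun unbr_pos :: "nat \<Rightarrow> nat \<Rightarrow> nat \<Rightarrow> nat list \<Rightarrow> nat list" where
  "unbr_pos i c k [] = []"
| "unbr_pos i c k (x # xs) =
     (if x = Suc i then unbr_pos i (Suc c) (Suc k) xs
      else if x = i then
        (if 0 < c then unbr_pos i (c - 1) (Suc k) xs else k # unbr_pos i c (Suc k) xs)
      else unbr_pos i c (Suc k) xs)"

definition crystal_f :: "nat \<Rightarrow> nat list \<Rightarrow> nat list option" where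
  "crystal_f i w =
     (let ps = unbr_pos i 0 0 w in
      if ps = [] then None else Some (w[last ps := Suc i]))"

text \<open>Standardization: the occurrences of each letter j, left to right, are replaced by
  a_1+...+a_{j-1}+1, ..., a_1+...+a_j.\<close>
definition std :: "nat list \<Rightarrow> nat list" where
  "std w = map (\<lambda>k. length (filter (\<lambda>y. y < w ! k) w)
                    + length (filter (\<lambda>y. y = w ! k) (take k w)) + 1) [0..<length w]"

definition collapse :: "nat \<Rightarrow> nat \<Rightarrow> nat list \<Rightarrow> nat list" where
  "collapse i m \<pi> = map (\<lambda>x. if i \<le> x \<and> x \<le> i + m then i
                             else if i + m + 1 \<le> x \<and> x \<le> i + 2 * m then Suc i else x) \<pi>"

definition dyck_edge :: "nat \<Rightarrow> nat list \<Rightarrow> nat \<Rightarrow> nat \<Rightarrow> nat list \<Rightarrow> bool" where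
  "dyck_edge N \<pi> i m \<pi>' \<longleftrightarrow>
     dyck_interval N \<pi> i m \<and>
     (\<exists>v. crystal_f i (collapse i m \<pi>) = Some v \<and> \<pi>' = std v)"

end

theory Submission
  imports Defs
begin

text \<open>Restricted to the letters of I = [i, i+2m], a permutation has the Dyck insertion tableau
  exactly when its low letters i..i+m and its high letters i+m+1..i+2m each occur in increasing
  order and every high letter is bracketed by a later low letter: for such words row insertion
  keeps all lows in the bottom row and bumps as many highs into the second row as are bracketed,
  while any violation creates a defect that later insertions never repair. A single Knuth move
  preserves this condition, and on such words it remains a Knuth move after collapsing the lows
  to i and the highs to i+1. A Knuth move changes the bracketing of i against i+1 only inside
  its three-letter window, so f_i sends Knuth-related words to Knuth-related words; and
  standardization preserves Knuth moves because it preserves the relative order of letters,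
  ties being broken from left to right.\<close>

lemma knuth_step_append_context:
  "knuth_step x y \<Longrightarrow> knuth_step (p @ x @ s) (p @ y @ s)"
proof (induction rule: knuth_step.induct)
  case (K1 a b c u v)
  then show ?case using knuth_step.K1[of a b c "p @ u" "v @ s"] by simp
next
  case (K2 a b c u v)
  then show ?case using knuth_step.K2[of a b c "p @ u" "v @ s"] by simp
qed

lemma knuth_equiv_refl [simp]: "knuth_equiv x x"
  by (simp add: knuth_equiv_def)

lemma knuth_step_imp_knuth_equiv: "knuth_step x y \<Longrightarrow> knuth_equiv x y"
  unfolding knuth_equiv_def by (rule r_into_rtranclp) simp

lemma knuth_equiv_sym: "knuth_equiv x y \<Longrightarrow> knuth_equiv y x"
  unfolding knuth_equiv_def
  by (induction rule: rtranclp_induct) (auto intro: converse_rtranclp_into_rtranclp)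

lemma knuth_equiv_trans: "knuth_equiv x y \<Longrightarrow> knuth_equiv y z \<Longrightarrow> knuth_equiv x z"
  unfolding knuth_equiv_def by (rule rtranclp_trans)

lemma knuth_equiv_append_context:
  "knuth_equiv x y \<Longrightarrow> knuth_equiv (p @ x @ s) (p @ y @ s)"
  unfolding knuth_equiv_def
  by (induction rule: rtranclp_induct)
     (auto intro: rtranclp.rtrancl_into_rtrancl knuth_step_append_context)

lemma rel_option_knuth_equiv_sym:
  "rel_option knuth_equiv x y \<Longrightarrow> rel_option knuth_equiv y x"
  by (cases x; cases y) (auto intro: knuth_equiv_sym)

lemma rel_option_knuth_equiv_trans:
  "rel_option knuth_equiv x y \<Longrightarrow> rel_option knuth_equiv y z \<Longrightarrow> rel_option knuth_equiv x z"
  by (cases x; cases y; cases z) (auto intro: knuth_equiv_trans)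

lemma knuth_equiv_lift_option:
  assumes step: "\<And>x y. knuth_step x y \<Longrightarrow> rel_option knuth_equiv (F x) (F y)"
    and "knuth_equiv x y"
  shows "rel_option knuth_equiv (F x) (F y)"
  using assms(2)[unfolded knuth_equiv_def]
proof (induction rule: rtranclp_induct)
  case base
  show ?case by (cases "F x") simp_all
next
  case (step y z)
  from step.hyps(2) have "knuth_step y z \<or> knuth_step z y" by simp
  then have "rel_option knuth_equiv (F y) (F z)"
    using assms(1) rel_option_knuth_equiv_sym by blast
  with step.IH show ?case by (rule rel_option_knuth_equiv_trans)
qed

section \<open>Standardization\<close>

lemma length_filter_take_le: "length (filter P (take k xs)) \<le> length (filter P xs)"
  by (metis append_take_drop_id filter_append le_add1 length_append)

lemma length_filter_mono: "(\<And>x. P x \<Longrightarrow> Q x) \<Longrightarrow> length (filter P xs) \<le> length (filter Q xs)"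
  by (induction xs) auto

lemma length_filter_less_add_eq:
  fixes v :: "'a :: linorder"
  shows "length (filter (\<lambda>y. y < v) xs) + length (filter (\<lambda>y. y = v) xs) = length (filter (\<lambda>y. y \<le> v) xs)"
  by (induction xs) auto

lemma std_nth:
  "k < length w \<Longrightarrow>
   std w ! k = length (filter (\<lambda>y. y < w ! k) w) + length (filter (\<lambda>y. y = w ! k) (take k w)) + 1"
  by (simp add: std_def)

lemma length_std [simp]: "length (std w) = length w"
  by (simp add: std_def)

lemma std_nth_less:
  assumes k: "k < length w" and l: "l < length w"
    and order: "w ! k < w ! l \<or> (w ! k = w ! l \<and> k < l)"
  shows "std w ! k < std w ! l"
proof -
  have equal_upto_k: "length (filter (\<lambda>y. y = w ! k) (take k w)) < length (filter (\<lambda>y. y = w ! k) (take (Suc k) w))"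
    using k by (simp add: take_Suc_conv_app_nth)
  show ?thesis
  proof (cases "w ! k < w ! l")
    case True
    have "length (filter (\<lambda>y. y < w ! k) w) + length (filter (\<lambda>y. y = w ! k) w)
        = length (filter (\<lambda>y. y \<le> w ! k) w)"
      by (rule length_filter_less_add_eq)
    also have "\<dots> \<le> length (filter (\<lambda>y. y < w ! l) w)"
      using True by (intro length_filter_mono) auto
    finally show ?thesis
      using equal_upto_k length_filter_take_le[of "\<lambda>y. y = w ! k" "Suc k" w] k l
      by (simp add: std_nth)
  next
    case False
    with order have "w ! k = w ! l" "Suc k \<le> l" by auto
    moreover have "take (Suc k) w = take (Suc k) (take l w)"
      using \<open>Suc k \<le> l\<close> by (simp add: min_def)
    ultimately show ?thesis
      using equal_upto_k length_filter_take_le[of "\<lambda>y. y = w ! k" "Suc k" "take l w"] k l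
      by (simp add: std_nth)
  qed
qed

lemma std_swap_adjacent:
  assumes "p \<noteq> q"
  shows "std (pre @ [q, p] @ suf) =
    (let s = std (pre @ [p, q] @ suf); n = length pre
     in take n s @ [s ! Suc n, s ! n] @ drop (Suc (Suc n)) s)"
    (is "std ?y = ?R")
proof (rule nth_equalityI)
  let ?x = "pre @ [p, q] @ suf" and ?n = "length pre"
  show "length (std ?y) = length ?R" by (simp add: Let_def)
  fix k assume "k < length (std ?y)"
  then have k: "k < length ?x" by simp
  have less_count: "length (filter (\<lambda>y. y < v) ?y) = length (filter (\<lambda>y. y < v) ?x)" for v
    by simp
  consider "k < ?n" | "k = ?n" | "k = Suc ?n" | "Suc (Suc ?n) \<le> k"
    by linarith
  then show "std ?y ! k = ?R ! k"
  proof cases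
    case 1
    then show ?thesis using k less_count by (simp add: std_nth nth_append Let_def)
  next
    case 2
    then show ?thesis
      using k less_count assms by (simp add: std_nth nth_append take_Suc_conv_app_nth Let_def)
  next
    case 3
    then show ?thesis
      using k less_count assms by (simp add: std_nth nth_append take_Suc_conv_app_nth Let_def)
  next
    case 4
    then obtain j where j: "k = Suc (Suc ?n) + j" by (metis le_add_diff_inverse)
    have "length (filter (\<lambda>y. y = v) (take k ?y)) = length (filter (\<lambda>y. y = v) (take k ?x))" for v
      using j by simp
    then show ?thesis using k less_count j by (simp add: std_nth nth_append Let_def)
  qed
qed

lemma obtain_window3:
  assumes "length xs = n + 3 + k"
  obtains pre x y z suf where "xs = pre @ [x, y, z] @ suf" and "length pre = n"
proof -
  define rest where "rest = drop n xs"
  have "length rest = Suc (Suc (Suc k))" using assms by (simp add: rest_def)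
  then obtain x y z suf where "rest = [x, y, z] @ suf"
    by (auto simp: length_Suc_conv)
  then show thesis
    using that[of "take n xs"] assms by (simp add: rest_def) (metis append_take_drop_id)
qed

lemma std_knuth_step: "knuth_step w w' \<Longrightarrow> knuth_step (std w) (std w')"
proof (induction rule: knuth_step.induct)
  case (K1 a b c u v)
  let ?w = "u @ [a, c, b] @ v"
  obtain pre x y z suf where S: "std ?w = pre @ [x, y, z] @ suf" and n: "length pre = length u"
    by (rule obtain_window3[of "std ?w" "length u" "length v"]) simp
  have "x = std ?w ! length u" "y = std ?w ! Suc (length u)" "z = std ?w ! Suc (Suc (length u))"
    using S n by (simp_all add: nth_append)
  moreover have "std ?w ! length u < std ?w ! Suc (Suc (length u))"
    and "std ?w ! Suc (Suc (length u)) < std ?w ! Suc (length u)"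
    using K1 by (auto intro!: std_nth_less simp: nth_append)
  ultimately have "x < z" "z < y" by simp_all
  moreover have "std (u @ [c, a] @ b # v) = pre @ [y, x] @ z # suf"
    using std_swap_adjacent[of a c u "b # v"] K1 S n by (simp add: Let_def nth_append)
  ultimately show ?case
    using S knuth_step.K1[of x z y pre suf] by simp
next
  case (K2 a b c u v)
  let ?w = "u @ [b, a, c] @ v"
  obtain pre x y z suf where S: "std ?w = pre @ [x, y, z] @ suf" and n: "length pre = length u"
    by (rule obtain_window3[of "std ?w" "length u" "length v"]) simp
  have "x = std ?w ! length u" "y = std ?w ! Suc (length u)" "z = std ?w ! Suc (Suc (length u))"
    using S n by (simp_all add: nth_append)
  moreover have "std ?w ! Suc (length u) < std ?w ! length u"
    and "std ?w ! length u < std ?w ! Suc (Suc (length u))"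
    using K2 by (auto intro!: std_nth_less simp: nth_append)
  ultimately have "y < x" "x < z" by simp_all
  moreover have "std ((u @ [b]) @ [c, a] @ v) = (pre @ [x]) @ [z, y] @ suf"
    using std_swap_adjacent[of a c "u @ [b]" v] K2 S n by (simp add: Let_def nth_append)
  ultimately show ?case
    using S knuth_step.K2[of y x z pre suf] by simp
qed

lemma std_knuth_equiv: "knuth_equiv w w' \<Longrightarrow> knuth_equiv (std w) (std w')"
  using knuth_equiv_lift_option[of "\<lambda>w. Some (std w)"]
  by (simp add: knuth_step_imp_knuth_equiv std_knuth_step)

section \<open>The crystal operator\<close>

text \<open>Letters satisfying Op open brackets that later letters satisfying Cl close; a Cl letter with
  nothing open to its left stays unbracketed (truncated subtraction).\<close>
fun open_count :: "('a \<Rightarrow> bool) \<Rightarrow> ('a \<Rightarrow> bool) \<Rightarrow> nat \<Rightarrow> 'a list \<Rightarrow> nat" where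
  "open_count Op Cl c [] = c"
| "open_count Op Cl c (x # xs) =
     open_count Op Cl (if Op x then Suc c else if Cl x then c - 1 else c) xs"

lemma open_count_append:
  "open_count Op Cl c (xs @ ys) = open_count Op Cl (open_count Op Cl c xs) ys"
  by (induction xs arbitrary: c) auto

lemma open_count_le: "open_count Op Cl c w \<le> c + length (filter Op w)"
proof (induction w arbitrary: c)
  case (Cons x w)
  show ?case using Cons.IH[of "Suc c"] Cons.IH[of "c - 1"] Cons.IH[of c] by auto
qed simp

lemma open_count_filter:
  "(\<And>x. Op x \<or> Cl x \<Longrightarrow> Q x) \<Longrightarrow> open_count Op Cl c (filter Q xs) = open_count Op Cl c xs"
  by (induction xs arbitrary: c) auto

abbreviation open_succs :: "nat \<Rightarrow> nat \<Rightarrow> nat list \<Rightarrow> nat" where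
  "open_succs i \<equiv> open_count (\<lambda>x. x = Suc i) (\<lambda>x. x = i)"

lemma unbr_pos_append:
  "unbr_pos i c k (xs @ ys) = unbr_pos i c k xs @ unbr_pos i (open_succs i c xs) (k + length xs) ys"
  by (induction xs arbitrary: c k) auto

lemma unbr_pos_shift: "unbr_pos i c k xs = map ((+) k) (unbr_pos i c 0 xs)"
proof (induction xs arbitrary: c k)
  case Nil
  then show ?case by simp
next
  case (Cons x xs)
  have "unbr_pos i c' (Suc k) xs = map ((+) k) (unbr_pos i c' 1 xs)" for c'
    using Cons.IH[of c' "Suc k"] Cons.IH[of c' 1] by simp
  then show ?case by simp
qed

lemma unbr_pos_bounds: "p \<in> set (unbr_pos i c k xs) \<Longrightarrow> k \<le> p \<and> p < k + length xs"
  by (induction xs arbitrary: c k) (auto split: if_splits, fastforce+)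

text \<open>f_i on a factor w, when c letters i+1 to the left of w are still unbracketed.\<close>
definition crystal_f_from :: "nat \<Rightarrow> nat \<Rightarrow> nat list \<Rightarrow> nat list option" where
  "crystal_f_from i c w =
     (let ps = unbr_pos i c 0 w in if ps = [] then None else Some (w[last ps := Suc i]))"

lemma crystal_f_eq_from: "crystal_f i w = crystal_f_from i 0 w"
  by (simp add: crystal_f_def crystal_f_from_def)

lemma crystal_f_from_append:
  "crystal_f_from i c (xs @ ys) =
     (case crystal_f_from i (open_succs i c xs) ys of
        Some ys' \<Rightarrow> Some (xs @ ys')
      | None \<Rightarrow> map_option (\<lambda>xs'. xs' @ ys) (crystal_f_from i c xs))"
proof -
  define A where "A = unbr_pos i c 0 xs"
  define B where "B = unbr_pos i (open_succs i c xs) 0 ys"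
  have AB: "unbr_pos i c 0 (xs @ ys) = A @ map ((+) (length xs)) B"
    by (simp add: A_def B_def unbr_pos_append unbr_pos_shift[of _ _ "length xs"])
  show ?thesis
  proof (cases "B = []")
    case False
    have "last B < length ys"
      using False unbr_pos_bounds[of "last B" i "open_succs i c xs" 0 ys] by (simp add: B_def)
    then show ?thesis
      using False AB by (simp add: crystal_f_from_def B_def [symmetric] last_map list_update_append)
  next
    case True
    have "last A < length xs" if "A \<noteq> []"
      using that unbr_pos_bounds[of "last A" i c 0 xs] by (simp add: A_def)
    then show ?thesis
      using True AB by (simp add: crystal_f_from_def A_def [symmetric] B_def [symmetric] list_update_append)
  qed
qed

lemma crystal_f_from_window_congr:
  assumes "knuth_equiv t t'"
    and "open_succs i (open_succs i c u) t = open_succs i (open_succs i c u) t'"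
    and "rel_option knuth_equiv (crystal_f_from i (open_succs i c u) t)
                                 (crystal_f_from i (open_succs i c u) t')"
  shows "rel_option knuth_equiv (crystal_f_from i c (u @ t @ v)) (crystal_f_from i c (u @ t' @ v))"
  using assms
  by (cases "crystal_f_from i c u")
     (auto simp: crystal_f_from_append open_count_append
           split: option.split elim!: option.rel_cases intro: knuth_equiv_append_context)

lemma knuth_equiv_K1_window: "a \<le> b \<Longrightarrow> b < c \<Longrightarrow> knuth_equiv [a, c, b] [c, a, b]"
  using knuth_step.K1[of a b c "[]" "[]"] by (simp add: knuth_step_imp_knuth_equiv)

lemma knuth_equiv_K2_window: "a < b \<Longrightarrow> b \<le> c \<Longrightarrow> knuth_equiv [b, a, c] [b, c, a]"
  using knuth_step.K2[of a b c "[]" "[]"] by (simp add: knuth_step_imp_knuth_equiv)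

lemma crystal_f_from_K1_window:
  assumes "a \<le> b" "b < c"
  shows "open_succs i s [a, c, b] = open_succs i s [c, a, b] \<and>
    rel_option knuth_equiv (crystal_f_from i s [a, c, b]) (crystal_f_from i s [c, a, b])"
  using assms knuth_equiv_K1_window knuth_equiv_K2_window knuth_equiv_sym
  by (cases s) (auto simp: crystal_f_from_def less_Suc_eq_le split: if_splits dest: le_antisym)

lemma crystal_f_from_K2_window:
  assumes "a < b" "b \<le> c"
  shows "open_succs i s [b, a, c] = open_succs i s [b, c, a] \<and>
    rel_option knuth_equiv (crystal_f_from i s [b, a, c]) (crystal_f_from i s [b, c, a])"
  using assms knuth_equiv_K1_window knuth_equiv_K2_window knuth_equiv_sym
  by (cases s) (auto simp: crystal_f_from_def split: if_splits)

lemma crystal_f_knuth_step: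
  "knuth_step w w' \<Longrightarrow> rel_option knuth_equiv (crystal_f i w) (crystal_f i w')"
proof (induction rule: knuth_step.induct)
  case (K1 a b c u v)
  then show ?case
    using crystal_f_from_K1_window[OF K1, of i "open_succs i 0 u"]
    by (simp only: crystal_f_eq_from) (intro crystal_f_from_window_congr knuth_equiv_K1_window; simp)
next
  case (K2 a b c u v)
  then show ?case
    using crystal_f_from_K2_window[OF K2, of i "open_succs i 0 u"]
    by (simp only: crystal_f_eq_from) (intro crystal_f_from_window_congr knuth_equiv_K2_window; simp)
qed

lemma crystal_f_knuth_equiv:
  "knuth_equiv w w' \<Longrightarrow> rel_option knuth_equiv (crystal_f i w) (crystal_f i w')"
  by (rule knuth_equiv_lift_option[OF crystal_f_knuth_step])

section \<open>Insertion tableaux of two-block words\<close>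

lemma row_ins_append_max: "\<forall>z\<in>set r. z \<le> x \<Longrightarrow> row_ins x r = (r @ [x], None)"
  by (induction r) auto

lemma row_ins_bump:
  "\<forall>z\<in>set xs. z \<le> x \<Longrightarrow> x < y \<Longrightarrow> row_ins x (xs @ y # ys) = (xs @ x # ys, Some y)"
  by (induction xs) auto

lemma row_ins_set:
  assumes "row_ins x r = (r', b)"
  shows "set r' \<union> set_option b = insert x (set r)"
proof -
  have "set (fst (row_ins x r)) \<union> set_option (snd (row_ins x r)) = insert x (set r)"
  proof (induction r)
    case (Cons y ys)
    obtain r0 b0 where "row_ins x ys = (r0, b0)" by (cases "row_ins x ys")
    with Cons show ?case by (simp add: insert_commute)
  qed simp
  with assms show ?thesis by simp
qed

lemma row_ins_None_le:
  assumes "row_ins x r = (r', None)"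
  shows "\<forall>z\<in>set r. z \<le> x"
proof -
  have "snd (row_ins x r) = None \<Longrightarrow> \<forall>z\<in>set r. z \<le> x"
  proof (induction r)
    case (Cons y ys)
    obtain r0 b0 where "row_ins x ys = (r0, b0)" by (cases "row_ins x ys")
    with Cons show ?case by (simp split: if_splits)
  qed simp
  with assms show ?thesis by simp
qed

lemma row_ins_bumped_greater:
  assumes "row_ins x r = (r', Some y)"
  shows "x < y"
proof -
  have "snd (row_ins x r) = Some y \<Longrightarrow> x < y"
  proof (induction r)
    case (Cons z zs)
    obtain r0 b0 where "row_ins x zs = (r0, b0)" by (cases "row_ins x zs")
    with Cons show ?case by (simp split: if_splits)
  qed simp
  with assms show ?thesis by simp
qed

lemma row_ins_bumps_from_prefix:
  "\<exists>s\<in>set S. x < s \<Longrightarrow> \<exists>y\<in>set S. snd (row_ins x (S @ R)) = Some y"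
proof (induction S)
  case (Cons a S)
  show ?case
  proof (cases "x < a")
    case False
    then have "\<exists>s\<in>set S. x < s" using Cons.prems by auto
    with Cons.IH False show ?thesis by (auto split: prod.splits)
  qed simp
qed simp

lemma mem_row_ins: "x \<in> set (fst (row_ins x r))"
  by (induction r) (auto split: prod.splits)

lemma set_concat_tab_ins: "set (concat (tab_ins x T)) = insert x (set (concat T))"
proof (induction T arbitrary: x)
  case Nil
  then show ?case by simp
next
  case (Cons r rs)
  obtain r' b where rb: "row_ins x r = (r', b)" by (cases "row_ins x r")
  show ?case using row_ins_set[OF rb] Cons.IH rb by (cases b) auto
qed

lemma length_tab_ins_ge: "length T \<le> length (tab_ins x T)"
  by (induction T arbitrary: x) (auto split: prod.splits option.splits)

lemma mem_hd_tab_ins: "tab_ins x T \<noteq> [] \<and> x \<in> set (hd (tab_ins x T))"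
proof (cases T)
  case (Cons r rs)
  obtain r' b where rb: "row_ins x r = (r', b)" by (cases "row_ins x r")
  have "x \<in> set r'" using mem_row_ins[of x r] rb by simp
  then show ?thesis using Cons rb by (cases b) simp_all
qed simp

lemma P_tab_snoc: "P_tab (w @ [x]) = tab_ins x (P_tab w)"
  by (simp add: P_tab_def)

definition two_rows :: "nat list \<Rightarrow> nat list \<Rightarrow> nat list list" where
  "two_rows r1 r2 = (if r2 = [] then (if r1 = [] then [] else [r1]) else [r1, r2])"

lemma concat_two_rows [simp]: "concat (two_rows r1 r2) = r1 @ r2"
  by (simp add: two_rows_def)

lemma two_rows_Cons: "r1 \<noteq> [] \<Longrightarrow> two_rows r1 r2 = r1 # (if r2 = [] then [] else [r2])"
  by (simp add: two_rows_def)

lemma two_rows_eq_pair: "two_rows r1 r2 = [s1, s2] \<Longrightarrow> s1 \<noteq> [] \<Longrightarrow> r1 = s1 \<and> r2 = s2"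
  by (simp add: two_rows_def split: if_splits)

lemma tab_ins_two_rows_no_bump:
  "row_ins x r1 = (r1', None) \<Longrightarrow> tab_ins x (two_rows r1 r2) = two_rows r1' r2"
  using mem_row_ins[of x r1] by (auto simp: two_rows_def)

lemma tab_ins_two_rows_bump:
  "row_ins x r1 = (r1', Some y) \<Longrightarrow> row_ins y r2 = (r2', None) \<Longrightarrow>
   tab_ins x (two_rows r1 r2) = two_rows r1' r2'"
  using mem_row_ins[of y r2] row_ins_set[of x r1 r1' "Some y"] by (auto simp: two_rows_def)

definition low_letter :: "nat \<Rightarrow> nat \<Rightarrow> nat \<Rightarrow> bool" where
  "low_letter i m x \<longleftrightarrow> i \<le> x \<and> x \<le> i + m"

definition high_letter :: "nat \<Rightarrow> nat \<Rightarrow> nat \<Rightarrow> bool" where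
  "high_letter i m x \<longleftrightarrow> i + m < x \<and> x \<le> i + 2 * m"

lemma low_less_high: "low_letter i m x \<Longrightarrow> high_letter i m y \<Longrightarrow> x < y"
  by (simp add: low_letter_def high_letter_def)

definition blocks_increasing :: "nat \<Rightarrow> nat \<Rightarrow> nat list \<Rightarrow> bool" where
  "blocks_increasing i m w \<longleftrightarrow>
     sorted_wrt (<) (filter (low_letter i m) w) \<and> sorted_wrt (<) (filter (high_letter i m) w)"

abbreviation open_highs :: "nat \<Rightarrow> nat \<Rightarrow> nat \<Rightarrow> nat list \<Rightarrow> nat" where
  "open_highs i m \<equiv> open_count (high_letter i m) (low_letter i m)"

definition dyck_word :: "nat \<Rightarrow> nat \<Rightarrow> nat list \<Rightarrow> bool" where
  "dyck_word i m w \<longleftrightarrow> blocks_increasing i m w \<and> open_highs i m 0 w = 0"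

text \<open>For words whose low and whose high letters both increase this is the insertion tableau
  (\<open>P_tab_eq_block_tableau\<close>): the first k high letters have been bumped into the top row,
  where k is the number of highs bracketed by a later low.\<close>
definition block_tableau :: "nat \<Rightarrow> nat \<Rightarrow> nat list \<Rightarrow> nat list list" where
  "block_tableau i m w =
     (let H = filter (high_letter i m) w; k = length H - open_highs i m 0 w
      in two_rows (filter (low_letter i m) w @ drop k H) (take k H))"

lemma tab_ins_two_rows_bump_into_top:
  assumes "\<forall>z\<in>set S. z < x" "\<forall>z\<in>set H. x < z" "sorted_wrt (<) H" "k < length H"
  shows "tab_ins x (two_rows (S @ drop k H) (take k H))
       = two_rows (S @ x # drop (Suc k) H) (take (Suc k) H)"
proof -
  have drop_k: "drop k H = H ! k # drop (Suc k) H"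
    using assms(4) by (simp add: Cons_nth_drop_Suc)
  have "row_ins x (S @ H ! k # drop (Suc k) H) = (S @ x # drop (Suc k) H, Some (H ! k))"
    using assms by (intro row_ins_bump) auto
  moreover have "sorted_wrt (<) (take k H @ H ! k # drop (Suc k) H)"
    using assms(3) by (metis append_take_drop_id drop_k)
  then have "row_ins (H ! k) (take k H) = (take k H @ [H ! k], None)"
    by (intro row_ins_append_max) (auto simp: sorted_wrt_append)
  ultimately show ?thesis
    using assms(4) drop_k by (simp add: tab_ins_two_rows_bump take_Suc_conv_app_nth)
qed

lemma tab_ins_block_tableau_low:
  assumes incr: "blocks_increasing i m (w @ [x])" and x: "low_letter i m x"
  shows "tab_ins x (block_tableau i m w) = block_tableau i m (w @ [x])"
proof -
  define S where "S = filter (low_letter i m) w"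
  define H where "H = filter (high_letter i m) w"
  define k where "k = length H - open_highs i m 0 w"
  have S_less: "\<forall>z\<in>set S. z < x"
    using incr x by (simp add: blocks_increasing_def sorted_wrt_append S_def)
  have x_not_high: "\<not> high_letter i m x"
    using x by (simp add: low_letter_def high_letter_def)
  have old: "block_tableau i m w = two_rows (S @ drop k H) (take k H)"
    by (simp add: block_tableau_def S_def H_def k_def Let_def)
  show ?thesis
  proof (cases "open_highs i m 0 w = 0")
    case True
    then have "block_tableau i m (w @ [x]) = two_rows ((S @ [x]) @ drop k H) (take k H)"
      and "k = length H"
      using x x_not_high by (simp_all add: block_tableau_def S_def H_def k_def open_count_append)
    moreover have "row_ins x S = (S @ [x], None)"
      using S_less by (intro row_ins_append_max) auto
    ultimately show ?thesis
      using old by (simp add: tab_ins_two_rows_no_bump)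
  next
    case False
    have "open_highs i m 0 w \<le> length H"
      using open_count_le[of "high_letter i m" "low_letter i m" 0 w] by (simp add: H_def)
    with False have "k < length H" and "length H - (open_highs i m 0 w - 1) = Suc k"
      by (auto simp: k_def)
    moreover have "\<forall>z\<in>set H. x < z" and "sorted_wrt (<) H"
      using incr x low_less_high by (auto simp: blocks_increasing_def sorted_wrt_append H_def)
    ultimately show ?thesis
      using old S_less x x_not_high tab_ins_two_rows_bump_into_top
      by (simp add: block_tableau_def S_def H_def open_count_append Let_def)
  qed
qed

lemma tab_ins_block_tableau_high:
  assumes incr: "blocks_increasing i m (w @ [x])" and x: "high_letter i m x"
  shows "tab_ins x (block_tableau i m w) = block_tableau i m (w @ [x])"
proof -
  define S where "S = filter (low_letter i m) w"
  define H where "H = filter (high_letter i m) w"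
  define k where "k = length H - open_highs i m 0 w"
  have x_not_low: "\<not> low_letter i m x"
    using x by (simp add: low_letter_def high_letter_def)
  have "open_highs i m 0 w \<le> length H"
    using open_count_le[of "high_letter i m" "low_letter i m" 0 w] by (simp add: H_def)
  then have "block_tableau i m (w @ [x]) = two_rows (S @ drop k H @ [x]) (take k H)"
    using x x_not_low by (simp add: block_tableau_def S_def H_def k_def open_count_append Let_def)
  moreover have "\<forall>z\<in>set (S @ drop k H). z \<le> x"
    using incr x low_less_high
    by (fastforce simp: blocks_increasing_def sorted_wrt_append S_def H_def dest: in_set_dropD)
  ultimately show ?thesis
    by (simp add: block_tableau_def S_def H_def k_def Let_def tab_ins_two_rows_no_bump row_ins_append_max)
qed

lemma P_tab_eq_block_tableau:
  assumes "\<forall>z\<in>set w. low_letter i m z \<or> high_letter i m z" and "blocks_increasing i m w"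
  shows "P_tab w = block_tableau i m w"
  using assms
proof (induction w rule: rev_induct)
  case Nil
  then show ?case by (simp add: P_tab_def block_tableau_def two_rows_def)
next
  case (snoc x w)
  then have "P_tab w = block_tableau i m w"
    by (simp add: blocks_increasing_def sorted_wrt_append)
  with snoc.prems show ?case
    using tab_ins_block_tableau_low tab_ins_block_tableau_high by (auto simp: P_tab_snoc)
qed

text \<open>Defects that no further row insertion removes (\<open>bad_tableau_tab_ins\<close>) and that the
  Dyck tableau does not have; one appears as soon as the lows or the highs stop increasing.\<close>
definition bad_tableau :: "nat \<Rightarrow> nat \<Rightarrow> nat list list \<Rightarrow> bool" where
  "bad_tableau i m T \<longleftrightarrow>
     3 \<le> length T \<or> (\<exists>z\<in>set (concat (tl T)). low_letter i m z) \<or>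
     (2 \<le> length T \<and> (\<exists>y\<in>set (T ! 0). high_letter i m y \<and> (\<exists>z\<in>set (T ! 1). y < z)))"

lemma set_concat_tl_tab_ins: "set (concat rs) \<subseteq> set (concat (tl (tab_ins x (r # rs))))"
  using set_concat_tab_ins by (auto split: prod.splits option.splits)

lemma bad_tableau_tab_ins_two_rows:
  assumes "y \<in> set r1" "high_letter i m y" "z \<in> set r2" "y < z"
  shows "bad_tableau i m (tab_ins x [r1, r2])"
proof -
  obtain r1' b where row1: "row_ins x r1 = (r1', b)" by (cases "row_ins x r1")
  show ?thesis
  proof (cases b)
    case None
    then show ?thesis using assms row1 row_ins_set[OF row1] by (auto simp: bad_tableau_def)
  next
    case (Some w)
    obtain r2' c where row2: "row_ins w r2 = (r2', c)" by (cases "row_ins w r2")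
    show ?thesis
    proof (cases c)
      case None
      then have "y \<noteq> w" using row_ins_None_le[of w r2 r2'] row2 assms by force
      then have "y \<in> set r1'" using row_ins_set[OF row1] assms Some by auto
      moreover have "z \<in> set r2'" using row_ins_set[OF row2] assms None by auto
      ultimately show ?thesis using assms row1 row2 Some None by (auto simp: bad_tableau_def)
    next
      case (Some c')
      then show ?thesis using row1 row2 \<open>b = Some w\<close> by (simp add: bad_tableau_def)
    qed
  qed
qed

lemma bad_tableau_tab_ins:
  assumes "bad_tableau i m T"
  shows "bad_tableau i m (tab_ins x T)"
proof -
  have "length T = 2 \<Longrightarrow> T = [T ! 0, T ! 1]"
    by (cases T; cases "tl T") (auto simp: numeral_2_eq_2 length_Suc_conv)
  then consider (long) "3 \<le> length T" | (low_above) "\<exists>z\<in>set (concat (tl T)). low_letter i m z"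
    | (two_rows) y z where "T = [T ! 0, T ! 1]" "y \<in> set (T ! 0)" "high_letter i m y" "z \<in> set (T ! 1)" "y < z"
    using assms unfolding bad_tableau_def by force
  then show ?thesis
  proof cases
    case long
    then show ?thesis using length_tab_ins_ge[of T x] by (simp add: bad_tableau_def)
  next
    case low_above
    then obtain r rs where "T = r # rs" by (cases T) auto
    with low_above show ?thesis using set_concat_tl_tab_ins[of rs x r] by (auto simp: bad_tableau_def)
  next
    case two_rows
    then show ?thesis using bad_tableau_tab_ins_two_rows[of y "T ! 0" i m z "T ! 1" x] by simp
  qed
qed

lemma bad_tableau_tab_ins_high:
  assumes "high_letter i m x" "z \<in> set (concat T)" "x < z"
  shows "bad_tableau i m (tab_ins x T)"
proof -
  obtain r rs where T: "T = r # rs" using assms(2) by (cases T) auto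
  obtain r' b where row: "row_ins x r = (r', b)" by (cases "row_ins x r")
  have x_r': "x \<in> set r'" using mem_row_ins[of x r] row by simp
  show ?thesis
  proof (cases b)
    case (Some y)
    have "x < y" using row_ins_bumped_greater row Some by blast
    moreover have "tab_ins y rs \<noteq> [] \<and> y \<in> set (hd (tab_ins y rs))" by (rule mem_hd_tab_ins)
    ultimately show ?thesis using T row Some x_r' assms(1)
      by (cases "tab_ins y rs") (auto simp: bad_tableau_def)
  next
    case None
    have "z \<notin> set r" using row_ins_None_le[of x r r'] row None assms(3) by auto
    then have z_above: "z \<in> set (concat rs)" using assms(2) T by simp
    then obtain r2 rs' where rs: "rs = r2 # rs'" by (cases rs) auto
    show ?thesis
    proof (cases rs')
      case Nil
      then show ?thesis using T rs row None x_r' assms z_above by (auto simp: bad_tableau_def)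
    next
      case Cons
      then show ?thesis using T rs row None by (simp add: bad_tableau_def)
    qed
  qed
qed

lemma bad_tableau_tab_ins_low:
  assumes "\<forall>y\<in>set S. low_letter i m y" "\<exists>s\<in>set S. x < s"
  shows "bad_tableau i m (tab_ins x ((S @ R) # rs))"
proof -
  obtain y where y: "y \<in> set S" "snd (row_ins x (S @ R)) = Some y"
    using row_ins_bumps_from_prefix[OF assms(2)] by blast
  have "tl (tab_ins x ((S @ R) # rs)) = tab_ins y rs"
    using y(2) by (auto split: prod.splits)
  moreover have "y \<in> set (concat (tab_ins y rs))"
    unfolding set_concat_tab_ins by simp
  ultimately show ?thesis using y(1) assms(1) unfolding bad_tableau_def by metis
qed

lemma bad_tableau_first_violation:
  assumes "distinct (w @ [x])" "\<forall>z\<in>set (w @ [x]). low_letter i m z \<or> high_letter i m z"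
    and incr: "blocks_increasing i m w" and not_incr: "\<not> blocks_increasing i m (w @ [x])"
  shows "bad_tableau i m (P_tab (w @ [x]))"
proof -
  define S where "S = filter (low_letter i m) w"
  define H where "H = filter (high_letter i m) w"
  define k where "k = length H - open_highs i m 0 w"
  have P: "P_tab w = two_rows (S @ drop k H) (take k H)"
    using P_tab_eq_block_tableau incr assms(2)
    by (simp add: block_tableau_def S_def H_def k_def Let_def)
  have x_new: "x \<notin> set w" using assms(1) by simp
  have "low_letter i m x \<or> high_letter i m x" using assms(2) by simp
  then show ?thesis
  proof
    assume x: "low_letter i m x"
    then have "\<not> high_letter i m x" by (simp add: low_letter_def high_letter_def)
    then have "\<not> sorted_wrt (<) (S @ [x])"
      using not_incr incr x by (simp add: blocks_increasing_def S_def)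
    then obtain s where s: "s \<in> set S" "x < s"
      using incr x_new by (force simp: blocks_increasing_def sorted_wrt_append S_def)
    have "\<forall>y\<in>set S. low_letter i m y" by (simp add: S_def)
    then have "bad_tableau i m (tab_ins x ((S @ drop k H) # (if take k H = [] then [] else [take k H])))"
      using s by (intro bad_tableau_tab_ins_low) auto
    moreover have "S @ drop k H \<noteq> []" using s by auto
    ultimately show ?thesis by (simp add: P P_tab_snoc two_rows_Cons)
  next
    assume x: "high_letter i m x"
    then have "\<not> low_letter i m x" by (simp add: low_letter_def high_letter_def)
    then have "\<not> sorted_wrt (<) (H @ [x])"
      using not_incr incr x by (simp add: blocks_increasing_def H_def)
    then obtain h where "h \<in> set H" "x < h"
      using incr x_new by (force simp: blocks_increasing_def sorted_wrt_append H_def)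
    moreover have "set H \<subseteq> set (concat (P_tab w))"
      using set_append[of "take k H" "drop k H"] by (auto simp: P)
    ultimately show ?thesis
      using bad_tableau_tab_ins_high[OF x] by (auto simp: P_tab_snoc)
  qed
qed

lemma blocks_increasing_or_bad_tableau:
  assumes "distinct w" "\<forall>z\<in>set w. low_letter i m z \<or> high_letter i m z"
  shows "blocks_increasing i m w \<or> bad_tableau i m (P_tab w)"
  using assms
proof (induction w rule: rev_induct)
  case (snoc x w)
  then have "blocks_increasing i m w \<or> bad_tableau i m (P_tab w)"
    by simp
  then show ?case
    using bad_tableau_first_violation[OF snoc.prems] bad_tableau_tab_ins
    by (auto simp: P_tab_snoc)
qed (simp add: blocks_increasing_def)

lemma dyck_word_filter:
  assumes "\<And>x. low_letter i m x \<or> high_letter i m x \<Longrightarrow> Q x"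
  shows "dyck_word i m (filter Q w) \<longleftrightarrow> dyck_word i m w"
proof -
  have "filter (low_letter i m) (filter Q w) = filter (low_letter i m) w"
    and "filter (high_letter i m) (filter Q w) = filter (high_letter i m) w"
    using assms by (simp_all add: filter_filter) (metis (mono_tags) filter_cong)+
  moreover have "open_highs i m 0 (filter Q w) = open_highs i m 0 w"
    using assms by (intro open_count_filter) auto
  ultimately show ?thesis
    by (simp add: dyck_word_def blocks_increasing_def)
qed

lemma P_tab_eq_dyck_tableau_iff:
  assumes "distinct w" and w: "set w = {i..i + 2 * m}" and "1 \<le> m"
  shows "P_tab w = [[i..<i + m + 1], [i + m + 1..<i + 2 * m + 1]] \<longleftrightarrow> dyck_word i m w"
    (is "_ = ?T \<longleftrightarrow> _")
proof -
  define H where "H = [i + m + 1..<i + 2 * m + 1]"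
  define k where "k = m - open_highs i m 0 w"
  have letters: "\<forall>z\<in>set w. low_letter i m z \<or> high_letter i m z"
    using w by (auto simp: low_letter_def high_letter_def)
  have P: "P_tab w = two_rows ([i..<i + m + 1] @ drop k H) (take k H)"
    if incr: "blocks_increasing i m w"
  proof -
    have "filter (low_letter i m) w = [i..<i + m + 1]"
      using incr w by (intro strict_sorted_equal) (auto simp: blocks_increasing_def low_letter_def simp del: upt_Suc)
    moreover have "filter (high_letter i m) w = H"
      using incr w by (intro strict_sorted_equal) (auto simp: blocks_increasing_def high_letter_def H_def simp del: upt_Suc)
    ultimately show ?thesis
      using P_tab_eq_block_tableau[OF letters incr]
      by (simp add: block_tableau_def H_def k_def Let_def del: upt_Suc)
  qed
  have not_bad: "\<not> bad_tableau i m ?T"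
    by (auto simp: bad_tableau_def low_letter_def high_letter_def)
  show ?thesis
  proof
    assume PT: "P_tab w = ?T"
    then have incr: "blocks_increasing i m w"
      using blocks_increasing_or_bad_tableau[OF assms(1) letters] not_bad by auto
    have "two_rows ([i..<i + m + 1] @ drop k H) (take k H) = ?T"
      using P[OF incr] PT by simp
    then have "[i..<i + m + 1] @ drop k H = [i..<i + m + 1]"
      by (auto dest: two_rows_eq_pair simp del: upt_Suc)
    then have "m \<le> k" by (simp add: H_def del: upt_Suc)
    with \<open>1 \<le> m\<close> show "dyck_word i m w"
      using incr by (simp add: dyck_word_def k_def)
  next
    assume "dyck_word i m w"
    then show "P_tab w = ?T"
      using P \<open>1 \<le> m\<close> by (simp add: dyck_word_def k_def H_def two_rows_def del: upt_Suc)
  qed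
qed

lemma dyck_interval_iff_dyck_word:
  assumes "is_perm N \<pi>" and "1 \<le> m" "1 \<le> i" "i + 2 * m \<le> N"
  shows "dyck_interval N \<pi> i m \<longleftrightarrow> dyck_word i m \<pi>"
proof -
  define w where "w = filter (\<lambda>x. x \<in> {i..i + 2 * m}) \<pi>"
  have "distinct w" and "set w = {i..i + 2 * m}"
    using assms by (auto simp: w_def is_perm_def)
  then have "dyck_interval N \<pi> i m \<longleftrightarrow> dyck_word i m w"
    using assms P_tab_eq_dyck_tableau_iff by (simp add: dyck_interval_def w_def)
  also have "\<dots> \<longleftrightarrow> dyck_word i m \<pi>"
    unfolding w_def by (rule dyck_word_filter) (auto simp: low_letter_def high_letter_def)
  finally show ?thesis .
qed

section \<open>Dyck words under Knuth moves\<close>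

lemma sorted_filter_convex_knuth_step:
  assumes convex: "\<And>a b c. a \<le> b \<Longrightarrow> b \<le> c \<Longrightarrow> P a \<Longrightarrow> P c \<Longrightarrow> P b"
    and "knuth_step u v"
  shows "sorted_wrt (<) (filter P u) \<longleftrightarrow> sorted_wrt (<) (filter P v)"
  using assms(2)
proof induction
  case (K1 a b c u v)
  show ?case
  proof (cases "P a \<and> P c")
    case True
    then have "P b" using convex[of a b c] K1 by (simp add: less_imp_le)
    with True K1 show ?thesis by (auto simp: sorted_wrt_append)
  next
    case False
    then have "filter P [a, c, b] = filter P [c, a, b]" by auto
    then show ?thesis by (metis filter_append)
  qed
next
  case (K2 a b c u v)
  show ?case
  proof (cases "P a \<and> P c")
    case True
    then have "P b" using convex[of a b c] K2 by (simp add: less_imp_le)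
    with True K2 show ?thesis by (auto simp: sorted_wrt_append)
  next
    case False
    then have "filter P [b, a, c] = filter P [b, c, a]" by auto
    then show ?thesis by (metis filter_append)
  qed
qed

lemma blocks_increasing_knuth_step:
  "knuth_step u v \<Longrightarrow> blocks_increasing i m u \<longleftrightarrow> blocks_increasing i m v"
  unfolding blocks_increasing_def
  by (subst (1 2) sorted_filter_convex_knuth_step[of _ u v])
     (auto simp: low_letter_def high_letter_def)

lemma blocks_increasing_window:
  "blocks_increasing i m (u @ t @ v) \<Longrightarrow>
   sorted_wrt (<) (filter (low_letter i m) t) \<and> sorted_wrt (<) (filter (high_letter i m) t)"
  by (simp add: blocks_increasing_def sorted_wrt_append)

lemma open_highs_knuth_step:
  assumes "knuth_step u v" and "blocks_increasing i m u"
  shows "open_highs i m c u = open_highs i m c v"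
  using assms
proof induction
  case (K1 a b c u v)
  then show ?case
    using blocks_increasing_window[OF K1.prems]
    by (auto simp: open_count_append low_letter_def high_letter_def)
next
  case (K2 a b c u v)
  then show ?case
    using blocks_increasing_window[OF K2.prems]
    by (auto simp: open_count_append low_letter_def high_letter_def)
qed

definition collapse_letter :: "nat \<Rightarrow> nat \<Rightarrow> nat \<Rightarrow> nat" where
  "collapse_letter i m x =
     (if i \<le> x \<and> x \<le> i + m then i else if i + m + 1 \<le> x \<and> x \<le> i + 2 * m then Suc i else x)"

lemma collapse_eq_map: "collapse i m w = map (collapse_letter i m) w"
  by (simp add: collapse_def collapse_letter_def)

lemma collapse_letter_mono: "x \<le> y \<Longrightarrow> collapse_letter i m x \<le> collapse_letter i m y"
  by (auto simp: collapse_letter_def)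

lemma collapse_letter_eq_same_block:
  "x < y \<Longrightarrow> collapse_letter i m x = collapse_letter i m y \<Longrightarrow>
   (low_letter i m x \<and> low_letter i m y) \<or> (high_letter i m x \<and> high_letter i m y)"
  by (auto simp: collapse_letter_def low_letter_def high_letter_def split: if_splits)

lemma collapse_knuth_step:
  assumes "knuth_step u v" and "blocks_increasing i m u"
  shows "knuth_step (collapse i m u) (collapse i m v)"
  using assms
proof induction
  case (K1 a b c u v)
  let ?f = "collapse_letter i m"
  have "?f a \<le> ?f b" "?f b \<le> ?f c"
    using K1.hyps by (simp_all add: collapse_letter_mono)
  moreover have "?f b \<noteq> ?f c"
    using collapse_letter_eq_same_block[of b c i m] blocks_increasing_window[OF K1.prems] K1.hyps
    by (auto split: if_splits)
  ultimately show ?case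
    using knuth_step.K1[of "?f a" "?f b" "?f c" "map ?f u" "map ?f v"] by (simp add: collapse_eq_map)
next
  case (K2 a b c u v)
  let ?f = "collapse_letter i m"
  have "?f a \<le> ?f b" "?f b \<le> ?f c"
    using K2.hyps by (simp_all add: collapse_letter_mono)
  moreover have "?f a \<noteq> ?f b"
    using collapse_letter_eq_same_block[of a b i m] blocks_increasing_window[OF K2.prems] K2.hyps
    by (auto split: if_splits)
  ultimately show ?case
    using knuth_step.K2[of "?f a" "?f b" "?f c" "map ?f u" "map ?f v"] by (simp add: collapse_eq_map)
qed

lemma dyck_word_knuth_equiv:
  assumes "knuth_equiv u v" and "dyck_word i m u"
  shows "dyck_word i m v \<and> knuth_equiv (collapse i m u) (collapse i m v)"
proof -
  let ?F = "\<lambda>w. if dyck_word i m w then Some (collapse i m w) else None"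
  have "rel_option knuth_equiv (?F w) (?F w')" if "knuth_step w w'" for w w'
    using blocks_increasing_knuth_step[OF that] open_highs_knuth_step[OF that]
      collapse_knuth_step[OF that] knuth_step_imp_knuth_equiv
    by (auto simp: dyck_word_def)
  from knuth_equiv_lift_option[of ?F, OF this assms(1)] assms(2) show ?thesis
    by (auto split: if_splits)
qed

theorem proposition4p5:
  fixes N i m :: nat and \<pi> \<sigma> :: "nat list"
  assumes "is_perm N \<pi>" and "is_perm N \<sigma>"
    and "knuth_equiv \<pi> \<sigma>"
    and "dyck_interval N \<pi> i m"
  shows "dyck_interval N \<sigma> i m \<and>
         (\<forall>\<pi>' \<sigma>'. dyck_edge N \<pi> i m \<pi>' \<longrightarrow> dyck_edge N \<sigma> i m \<sigma>' \<longrightarrow> knuth_equiv \<pi>' \<sigma>')"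
proof -
  have bounds: "1 \<le> m" "1 \<le> i" "i + 2 * m \<le> N"
    using assms(4) by (simp_all add: dyck_interval_def)
  have "dyck_word i m \<pi>"
    using assms(4) dyck_interval_iff_dyck_word[OF assms(1) bounds] by simp
  then have "dyck_word i m \<sigma>" and collapsed: "knuth_equiv (collapse i m \<pi>) (collapse i m \<sigma>)"
    using dyck_word_knuth_equiv[OF assms(3)] by auto
  then have "dyck_interval N \<sigma> i m"
    using dyck_interval_iff_dyck_word[OF assms(2) bounds] by simp
  moreover have "knuth_equiv \<pi>' \<sigma>'" if edges: "dyck_edge N \<pi> i m \<pi>'" "dyck_edge N \<sigma> i m \<sigma>'" for \<pi>' \<sigma>'
  proof -
    obtain v v' where "crystal_f i (collapse i m \<pi>) = Some v" "\<pi>' = std v"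
      and "crystal_f i (collapse i m \<sigma>) = Some v'" "\<sigma>' = std v'"
      using edges by (auto simp: dyck_edge_def)
    with crystal_f_knuth_equiv[OF collapsed, of i] show ?thesis
      by (simp add: std_knuth_equiv)
  qed
  ultimately show ?thesis by blast
qed

end
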